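(* Let $\{\omega_v:v\in\mathbb{Z}^2\}$ be i.i.d. real random variables with $\bar F(x)=\mathbb{P}(\omega>x)$, let $n\ge1$, $\beta_n>0$, $k_n>0$, and set $\tilde\omega_v=\omega_v\mathds{1}_{\{\omega_v\le k_n\}}$. Let $0=h_0<h_1<\dots<h_\ell$ be integers with $\ell\ge1$ and $h_{\ell-1}<n\le h_\ell$. Then for any real number $A>0$, \[ \mathbb{P}\big(\log Z^{\omega}_{n,\beta_n}-\log Z^{\tilde\omega}_{n,\beta_n}>A\big)\le|\mathbf{B}_1|\cdot\bar F(k_n)+\mathbb{P}\Big(\sum_{j=2}^{\ell}\exp(\beta_nM_j)\,\mathbf{P}^{\tilde\omega}_{n,\beta_n}(\mathcal{B}_{j-1}^c)>A\Big). \]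
   Context: $\mathscr{S}_0^n$ is the set of nearest-neighbour paths $\mathbf{s}=((i,s_i))_{i=0}^n$ with $s_0=0$, $|s_i-s_{i-1}|=1$. For an environment $\{\omega_v\}$ and $\mathcal{A}\subseteq\mathscr{S}_0^n$, $Z^{\omega}_{n,\beta}(\mathcal{A}):=2^{-n}\sum_{\mathbf{s}\in\mathcal{A}}\exp\big(\beta\sum_{i=1}^n\omega_{i,s_i}\big)$ and $Z^{\omega}_{n,\beta}:=Z^{\omega}_{n,\beta}(\mathscr{S}_0^n)$; the polymer measure is $\mathbf{P}^{\omega}_{n,\beta}(\mathcal{A})=Z^{\omega}_{n,\beta}(\mathcal{A})/Z^{\omega}_{n,\beta}$. For $j=1,\dots,\ell$: $\mathbf{B}_j=([0,n]\times(-h_j,h_j))\cap\mathbb{Z}^2$ with cardinality $|\mathbf{B}_j|$; $\mathcal{B}_j=\{\mathbf{s}\in\mathscr{S}_0^n:\max_{1\le i\le n}|s_i|<h_j\}$ and $\mathcal{B}_j^c=\mathscr{S}_0^n\setminus\mathcal{B}_j$; $M_j=\sum_{v\in\mathbf{B}_j}\omega_v\mathds{1}_{\{\omega_v>k_n\}}$. *)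

theory Defs
  imports "HOL-Probability.Probability"
begin

type_synonym site = "int \<times> int"

text \<open>Nearest-neighbour paths of length n started at 0; a path is a function
  s :: nat => int with s 0 = 0, |s i - s (i-1)| = 1 for 1 <= i <= n,
  normalised by s i = 0 for i > n (so the set is finite and in bijection with
  the set of paths ((i,s_i)) i=0..n).\<close>
definition paths :: "nat \<Rightarrow> (nat \<Rightarrow> int) set" where
  "paths n = {s. s 0 = 0 \<and> (\<forall>i\<in>{1..n}. \<bar>s i - s (i - 1)\<bar> = 1) \<and> (\<forall>i>n. s i = 0)}"

definition part_fn :: "(site \<Rightarrow> real) \<Rightarrow> nat \<Rightarrow> real \<Rightarrow> (nat \<Rightarrow> int) set \<Rightarrow> real" where
  "part_fn w n \<beta> S = (1 / 2 ^ n) * (\<Sum>s\<in>S. exp (\<beta> * (\<Sum>i=1..n. w (int i, s i))))"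

definition Zfull :: "(site \<Rightarrow> real) \<Rightarrow> nat \<Rightarrow> real \<Rightarrow> real" where
  "Zfull w n \<beta> = part_fn w n \<beta> (paths n)"

definition polymer :: "(site \<Rightarrow> real) \<Rightarrow> nat \<Rightarrow> real \<Rightarrow> (nat \<Rightarrow> int) set \<Rightarrow> real" where
  "polymer w n \<beta> S = part_fn w n \<beta> S / Zfull w n \<beta>"

definition box :: "nat \<Rightarrow> int \<Rightarrow> site set" where
  "box n h = {(i, x). 0 \<le> i \<and> i \<le> int n \<and> - h < x \<and> x < h}"

definition in_strip :: "nat \<Rightarrow> int \<Rightarrow> (nat \<Rightarrow> int) set" where
  "in_strip n h = {s \<in> paths n. \<forall>i\<in>{1..n}. \<bar>s i\<bar> < h}"

definition truncate_env :: "real \<Rightarrow> (site \<Rightarrow> real) \<Rightarrow> site \<Rightarrow> real" where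
  "truncate_env k w v = (if w v \<le> k then w v else 0)"

definition bigsum :: "real \<Rightarrow> (site \<Rightarrow> real) \<Rightarrow> nat \<Rightarrow> int \<Rightarrow> real" where
  "bigsum k w n h = (\<Sum>v\<in>box n h. if w v > k then w v else 0)"

end

theory Submission
  imports Defs
begin

text \<open>Write \<omega> = \<omega>' + g with \<omega>' the truncated environment and g(v) = \<omega>(v) 1{\<omega>(v) > k} \<ge> 0
  the excess. A union bound over at most |B_1| sites shows that, off an event of probability
  |B_1| P(\<omega> > k), every path collects excess only at sites outside B_1 other than the corners
  (n, \<plusminus>n). Such a path either collects no excess at all, or it leaves the strip of half-width
  h_(j-1), where j \<ge> 2 is the least level whose box contains every site at which it collects
  excess; its excess is then at most M_j. Summing over paths,
  Z(\<omega>) \<le> Z(\<omega>') (1 + \<Sum>_(j\<ge>2) exp(\<beta> M_j) P_\<omega>'(B_(j-1)^c)), and ln x \<le> x - 1 concludes.\<close>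

lemma paths_abs_le:
  assumes "s \<in> paths n" "i \<le> n"
  shows "\<bar>s i\<bar> \<le> int i"
  using assms(2)
proof (induction i)
  case 0
  then show ?case using assms(1) by (simp add: paths_def)
next
  case (Suc i)
  then have "Suc i \<in> {1..n}" by simp
  then have "\<bar>s (Suc i) - s i\<bar> = 1"
    using assms(1) unfolding paths_def by fastforce
  with Suc show ?case by linarith
qed

lemma paths_abs_1:
  assumes "s \<in> paths n" "n \<ge> 1"
  shows "\<bar>s 1\<bar> = 1"
proof -
  have "1 \<in> {1..n}" using assms(2) by simp
  then show ?thesis using assms(1) unfolding paths_def by fastforce
qed

lemma finite_paths: "finite (paths n)"
proof -
  let ?ext = "\<lambda>f i. if i \<le> n then f i else 0"
  have "paths n \<subseteq> ?ext ` (PiE {..n} (\<lambda>_. {-int n..int n}))"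
  proof
    fix s assume s: "s \<in> paths n"
    have "s = ?ext (restrict s {..n})"
      using s by (auto simp: paths_def fun_eq_iff)
    moreover have "restrict s {..n} \<in> PiE {..n} (\<lambda>_. {-int n..int n})"
      using paths_abs_le[OF s] by force
    ultimately show "s \<in> ?ext ` (PiE {..n} (\<lambda>_. {-int n..int n}))"
      by blast
  qed
  then show ?thesis
    by (rule finite_subset) (intro finite_imageI finite_PiE, auto)
qed

lemma paths_nonempty: "paths n \<noteq> {}"
proof -
  have "(\<lambda>i. if i \<le> n then int i else 0) \<in> paths n"
    by (auto simp: paths_def)
  then show ?thesis by blast
qed

lemma finite_box: "finite (box n h)"
proof -
  have "box n h = {0..int n} \<times> {-h<..<h}"
    by (auto simp: box_def)
  then show ?thesis by simp
qed

lemma part_fn_pos: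
  assumes "finite S" "S \<noteq> {}"
  shows "part_fn w n \<beta> S > 0"
  using assms by (simp add: part_fn_def sum_pos)

lemma Zfull_pos: "Zfull w n \<beta> > 0"
  by (simp add: Zfull_def part_fn_pos finite_paths paths_nonempty)

lemma part_fn_eq_Zfull_mult_polymer: "part_fn w n \<beta> S = Zfull w n \<beta> * polymer w n \<beta> S"
  using Zfull_pos[of w n \<beta>] by (simp add: polymer_def)

definition excess :: "real \<Rightarrow> (site \<Rightarrow> real) \<Rightarrow> site \<Rightarrow> real" where
  "excess k w v = (if w v > k then w v else 0)"

lemma truncate_env_add_excess: "truncate_env k w v + excess k w v = w v"
  by (simp add: truncate_env_def excess_def)

lemma excess_nonneg: "k \<ge> 0 \<Longrightarrow> excess k w v \<ge> 0"
  by (simp add: excess_def)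

lemma bigsum_eq_sum_excess: "bigsum k w n h = (\<Sum>v\<in>box n h. excess k w v)"
  by (simp add: bigsum_def excess_def)

lemma sum_along_path_le_sum:
  fixes g :: "site \<Rightarrow> real"
  assumes "finite I" "finite B" "\<And>v. g v \<ge> 0"
    and "\<And>i. i \<in> I \<Longrightarrow> g (int i, s i) \<noteq> 0 \<Longrightarrow> (int i, s i) \<in> B"
  shows "(\<Sum>i\<in>I. g (int i, s i)) \<le> (\<Sum>v\<in>B. g v)"
proof -
  let ?J = "{i\<in>I. (int i, s i) \<in> B}"
  have "(\<Sum>i\<in>I. g (int i, s i)) = (\<Sum>i\<in>?J. g (int i, s i))"
    using assms(1,4) by (intro sum.mono_neutral_right) auto
  also have "\<dots> = (\<Sum>v\<in>(\<lambda>i. (int i, s i)) ` ?J. g v)"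
    by (subst sum.reindex) (auto simp: inj_on_def)
  also have "\<dots> \<le> (\<Sum>v\<in>B. g v)"
    using assms(2,3) by (intro sum_mono2) auto
  finally show ?thesis .
qed

text \<open>The sites on which the excess must vanish: a path never visits (0,0) or (1,0) at times
  1..n, while the corners (n, \<plusminus>n) are the only sites it can visit outside B_\<ell> (when h_\<ell> = n).
  Trading the former for the latter keeps the union bound at |B_1|.\<close>
definition truncation_sites :: "nat \<Rightarrow> int \<Rightarrow> site set" where
  "truncation_sites n h1 = (box n h1 - {(0, 0), (1, 0)}) \<union> {(int n, int n), (int n, - int n)}"

lemma finite_truncation_sites: "finite (truncation_sites n h1)"
  by (simp add: truncation_sites_def finite_box)

lemma card_truncation_sites_le:
  assumes "h1 \<ge> 1" "n \<ge> 1"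
  shows "card (truncation_sites n h1) \<le> card (box n h1)"
proof -
  have sub: "{(0, 0), (1, 0)} \<subseteq> box n h1"
    using assms by (auto simp: box_def)
  have "card (truncation_sites n h1)
      \<le> card (box n h1 - {(0, 0), (1, 0)}) + card {(int n, int n), (int n, - int n)}"
    unfolding truncation_sites_def by (rule card_Un_le)
  also have "\<dots> \<le> (card (box n h1) - 2) + 2"
    using card_Diff_subset[OF _ sub] by (intro add_mono) (auto simp: card_insert_if)
  also have "\<dots> = card (box n h1)"
    using card_mono[OF finite_box sub] by simp
  finally show ?thesis .
qed

lemma excess_along_path_cases:
  fixes L :: nat and h :: "nat \<Rightarrow> int"
  assumes "n \<ge> 1" "k \<ge> 0" "h 0 = 0" "int n \<le> h L"
    and good: "\<forall>v\<in>truncation_sites n (h 1). w v \<le> k"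
    and s: "s \<in> paths n"
  defines "G \<equiv> \<Sum>i=1..n. excess k w (int i, s i)"
  shows "G = 0 \<or> (\<exists>j\<in>{2..L}. s \<notin> in_strip n (h (j - 1)) \<and> G \<le> bigsum k w n (h j))"
proof -
  define covered where "covered j \<longleftrightarrow> (\<forall>i\<in>{1..n}. excess k w (int i, s i) \<noteq> 0 \<longrightarrow> \<bar>s i\<bar> < h j)" for j
  have excess_good: "excess k w v = 0" if "v \<in> truncation_sites n (h 1)" for v
    using good that by (auto simp: excess_def)
  have "covered L"
    unfolding covered_def
  proof (intro ballI impI)
    fix i assume i: "i \<in> {1..n}" and g: "excess k w (int i, s i) \<noteq> 0"
    have "(int i, s i) \<notin> truncation_sites n (h 1)" using excess_good g by blast
    then have "\<bar>s i\<bar> \<noteq> int n \<or> i \<noteq> n" by (auto simp: truncation_sites_def abs_if)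
    moreover have "\<bar>s i\<bar> \<le> int i" using paths_abs_le[OF s] i by auto
    ultimately show "\<bar>s i\<bar> < h L" using i \<open>int n \<le> h L\<close> by auto
  qed
  define j0 where "j0 = (LEAST j. covered j)"
  have "covered j0" "j0 \<le> L"
    unfolding j0_def using \<open>covered L\<close> by (auto intro: LeastI Least_le)
  show ?thesis
  proof (cases "j0 \<le> 1")
    case True
    have "excess k w (int i, s i) = 0" if i: "i \<in> {1..n}" for i
    proof (rule ccontr)
      assume g: "excess k w (int i, s i) \<noteq> 0"
      then have "\<bar>s i\<bar> < h j0" using \<open>covered j0\<close> i by (auto simp: covered_def)
      then have "j0 = 1" using True \<open>h 0 = 0\<close> by (cases j0) auto
      with \<open>\<bar>s i\<bar> < h j0\<close> have "(int i, s i) \<in> box n (h 1)" using i by (auto simp: box_def)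
      moreover have "s i \<noteq> 0" if "i = 1" using paths_abs_1[OF s \<open>n \<ge> 1\<close>] that by auto
      ultimately have "(int i, s i) \<in> truncation_sites n (h 1)"
        using i by (auto simp: truncation_sites_def)
      with g excess_good show False by blast
    qed
    then show ?thesis by (simp add: G_def)
  next
    case False
    have "\<not> covered (j0 - 1)" unfolding j0_def by (rule not_less_Least) (use False j0_def in auto)
    then have "s \<notin> in_strip n (h (j0 - 1))" by (auto simp: covered_def in_strip_def)
    moreover have "G \<le> bigsum k w n (h j0)"
      unfolding G_def bigsum_eq_sum_excess
      using \<open>covered j0\<close> excess_nonneg[OF \<open>k \<ge> 0\<close>]
      by (intro sum_along_path_le_sum finite_box) (auto simp: covered_def box_def abs_less_iff)
    ultimately show ?thesis using False \<open>j0 \<le> L\<close> by auto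
  qed
qed

lemma path_weight_le:
  fixes L :: nat and h :: "nat \<Rightarrow> int"
  assumes "n \<ge> 1" "\<beta> \<ge> 0" "k \<ge> 0" "h 0 = 0" "int n \<le> h L"
    and "\<forall>v\<in>truncation_sites n (h 1). w v \<le> k"
    and s: "s \<in> paths n"
  shows "exp (\<beta> * (\<Sum>i=1..n. w (int i, s i)))
    \<le> exp (\<beta> * (\<Sum>i=1..n. truncate_env k w (int i, s i)))
      * (1 + (\<Sum>j=2..L. if s \<notin> in_strip n (h (j - 1)) then exp (\<beta> * bigsum k w n (h j)) else 0))"
proof -
  define G where "G = (\<Sum>i=1..n. excess k w (int i, s i))"
  define E where "E j = (if s \<notin> in_strip n (h (j - 1)) then exp (\<beta> * bigsum k w n (h j)) else 0)" for j
  have "(\<Sum>i=1..n. w (int i, s i)) = (\<Sum>i=1..n. truncate_env k w (int i, s i)) + G"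
    by (simp add: G_def sum.distrib[symmetric] truncate_env_add_excess)
  then have split: "exp (\<beta> * (\<Sum>i=1..n. w (int i, s i)))
      = exp (\<beta> * (\<Sum>i=1..n. truncate_env k w (int i, s i))) * exp (\<beta> * G)"
    by (simp add: distrib_left exp_add)
  have E_nonneg: "E j \<ge> 0" for j by (simp add: E_def)
  have "exp (\<beta> * G) \<le> 1 + (\<Sum>j=2..L. E j)"
    using excess_along_path_cases[OF assms(1,3,4,5,6) s]
  proof (elim disjE bexE conjE)
    assume "(\<Sum>i=1..n. excess k w (int i, s i)) = 0"
    then show ?thesis using E_nonneg by (simp add: G_def sum_nonneg)
  next
    fix j assume j: "j \<in> {2..L}" "s \<notin> in_strip n (h (j - 1))"
      and "(\<Sum>i=1..n. excess k w (int i, s i)) \<le> bigsum k w n (h j)"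
    then have "exp (\<beta> * G) \<le> E j"
      using \<open>\<beta> \<ge> 0\<close> by (simp add: G_def E_def mult_left_mono)
    also have "\<dots> \<le> (\<Sum>j=2..L. E j)"
      using j E_nonneg by (intro member_le_sum) auto
    finally show ?thesis by simp
  qed
  then show ?thesis
    unfolding split E_def by (simp add: mult_left_mono)
qed

definition exit_weight :: "real \<Rightarrow> (site \<Rightarrow> real) \<Rightarrow> nat \<Rightarrow> real \<Rightarrow> nat \<Rightarrow> (nat \<Rightarrow> int) \<Rightarrow> real" where
  "exit_weight k w n \<beta> L h = (\<Sum>j=2..L. exp (\<beta> * bigsum k w n (h j))
      * polymer (truncate_env k w) n \<beta> (paths n - in_strip n (h (j - 1))))"

lemma Zfull_le_Zfull_truncate_env:
  fixes L :: nat and h :: "nat \<Rightarrow> int"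
  assumes "n \<ge> 1" "\<beta> \<ge> 0" "k \<ge> 0" "h 0 = 0" "int n \<le> h L"
    and "\<forall>v\<in>truncation_sites n (h 1). w v \<le> k"
  shows "Zfull w n \<beta> \<le> Zfull (truncate_env k w) n \<beta> * (1 + exit_weight k w n \<beta> L h)"
proof -
  define t where "t = truncate_env k w"
  define P where "P = paths n"
  define I where "I j = in_strip n (h (j - 1))" for j
  define e where "e j = exp (\<beta> * bigsum k w n (h j))" for j
  define Wt where "Wt s = exp (\<beta> * (\<Sum>i=1..n. t (int i, s i)))" for s
  have finP: "finite P" by (simp add: P_def finite_paths)
  have "Zfull w n \<beta> = (1 / 2 ^ n) * (\<Sum>s\<in>P. exp (\<beta> * (\<Sum>i=1..n. w (int i, s i))))"
    by (simp add: Zfull_def part_fn_def P_def)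
  also have "\<dots> \<le> (1 / 2 ^ n) * (\<Sum>s\<in>P. Wt s * (1 + (\<Sum>j=2..L. if s \<notin> I j then e j else 0)))"
    unfolding P_def Wt_def t_def I_def e_def
    by (intro mult_left_mono sum_mono path_weight_le[OF assms]) auto
  also have "\<dots> = Zfull t n \<beta> + (\<Sum>j=2..L. e j * part_fn t n \<beta> (P - I j))"
  proof -
    have filter: "(\<Sum>s\<in>P. if s \<notin> I j then e j * Wt s else 0) = e j * (\<Sum>s\<in>P - I j. Wt s)" for j
      using sum.inter_filter[OF finP, of "\<lambda>s. e j * Wt s" "\<lambda>s. s \<notin> I j"]
      by (simp add: set_diff_eq sum_distrib_left)
    have "(\<Sum>s\<in>P. Wt s * (1 + (\<Sum>j=2..L. if s \<notin> I j then e j else 0)))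
        = (\<Sum>s\<in>P. Wt s) + (\<Sum>j=2..L. \<Sum>s\<in>P. if s \<notin> I j then e j * Wt s else 0)"
      by (simp add: distrib_left sum.distrib sum_distrib_left sum.swap[of _ P] if_distrib mult.commute
          cong: if_cong)
    also have "\<dots> = (\<Sum>s\<in>P. Wt s) + (\<Sum>j=2..L. e j * (\<Sum>s\<in>P - I j. Wt s))"
      by (simp add: filter)
    finally show ?thesis
      by (simp add: Zfull_def P_def part_fn_def Wt_def distrib_left sum_distrib_left mult.left_commute)
  qed
  also have "\<dots> = Zfull t n \<beta> * (1 + exit_weight k w n \<beta> L h)"
    by (simp add: part_fn_eq_Zfull_mult_polymer exit_weight_def P_def I_def e_def t_def
        distrib_left sum_distrib_left mult_ac)
  finally show ?thesis by (simp add: t_def)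
qed

lemma ln_Zfull_diff_le_exit_weight:
  fixes L :: nat and h :: "nat \<Rightarrow> int"
  assumes "n \<ge> 1" "\<beta> \<ge> 0" "k \<ge> 0" "h 0 = 0" "int n \<le> h L"
    and "\<forall>v\<in>truncation_sites n (h 1). w v \<le> k"
  shows "ln (Zfull w n \<beta>) - ln (Zfull (truncate_env k w) n \<beta>) \<le> exit_weight k w n \<beta> L h"
proof -
  let ?Z = "Zfull w n \<beta>" and ?Zt = "Zfull (truncate_env k w) n \<beta>"
  have pos: "?Z > 0" "?Zt > 0" by (simp_all add: Zfull_pos)
  have ratio: "?Z / ?Zt \<le> 1 + exit_weight k w n \<beta> L h"
    using Zfull_le_Zfull_truncate_env[OF assms] pos by (simp add: divide_le_eq mult.commute)
  have "ln ?Z - ln ?Zt = ln (?Z / ?Zt)" using pos by (simp add: ln_div)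
  also have "\<dots> \<le> ?Z / ?Zt - 1" using pos by (intro ln_le_minus_one) simp
  also have "\<dots> \<le> exit_weight k w n \<beta> L h" using ratio by simp
  finally show ?thesis .
qed

lemma measurable_exit_weight:
  assumes "\<And>v. \<omega> v \<in> borel_measurable M"
  shows "(\<lambda>x. exit_weight k (\<lambda>v. \<omega> v x) n \<beta> L h) \<in> borel_measurable M"
proof -
  have "(\<lambda>x. truncate_env k (\<lambda>v. \<omega> v x) v) \<in> borel_measurable M" for v
    unfolding truncate_env_def using assms by measurable
  then have "(\<lambda>x. part_fn (truncate_env k (\<lambda>v. \<omega> v x)) n \<beta> S) \<in> borel_measurable M" for S
    unfolding part_fn_def by measurable
  moreover have "(\<lambda>x. bigsum k (\<lambda>v. \<omega> v x) n H) \<in> borel_measurable M" for H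
    unfolding bigsum_def using assms by measurable
  ultimately show ?thesis
    unfolding exit_weight_def polymer_def Zfull_def by measurable
qed

lemma (in prob_space) prob_le_union_bound:
  assumes "A \<subseteq> (\<Union>v\<in>S. E v) \<union> B" "finite S" "\<And>v. v \<in> S \<Longrightarrow> E v \<in> events" "B \<in> events"
  shows "prob A \<le> (\<Sum>v\<in>S. prob (E v)) + prob B"
proof -
  have events: "(\<Union>v\<in>S. E v) \<in> events" using assms(2,3) by blast
  have "prob A \<le> prob ((\<Union>v\<in>S. E v) \<union> B)"
    using assms(1,4) events by (intro finite_measure_mono) auto
  also have "\<dots> \<le> prob (\<Union>v\<in>S. E v) + prob B"
    using events assms(4) by (rule measure_Un_le)
  also have "prob (\<Union>v\<in>S. E v) \<le> (\<Sum>v\<in>S. prob (E v))"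
    using assms(2,3) by (intro finite_measure_subadditive_finite) auto
  finally show ?thesis by simp
qed

lemma (in prob_space) prob_greater_eq_if_distr_eq:
  fixes c :: real
  assumes "X \<in> borel_measurable M" "Y \<in> borel_measurable M" "distr M borel X = distr M borel Y"
  shows "prob {x \<in> space M. X x > c} = prob {x \<in> space M. Y x > c}"
proof -
  have "prob {x \<in> space M. Z x > c} = measure (distr M borel Z) {c<..}"
    if "Z \<in> borel_measurable M" for Z :: "'a \<Rightarrow> real"
    using that by (subst measure_distr) (auto intro!: arg_cong[where f = prob])
  then show ?thesis using assms by metis
qed

theorem lemma2p2:
  fixes M :: "'a measure" and \<omega> :: "site \<Rightarrow> 'a \<Rightarrow> real"
    and n L :: nat and \<beta> k A :: real and h :: "nat \<Rightarrow> int"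
  assumes "prob_space M"
    and "prob_space.indep_vars M (\<lambda>_. borel) \<omega> UNIV"
    and "\<And>v. distr M borel (\<omega> v) = distr M borel (\<omega> (0, 0))"
    and "n \<ge> 1" and "\<beta> > 0" and "k > 0"
    and "L \<ge> 1" and "h 0 = 0" and "\<And>j. j < L \<Longrightarrow> h j < h (Suc j)"
    and "h (L - 1) < int n" and "int n \<le> h L"
    and "A > 0"
  shows "measure M {x \<in> space M.
            ln (Zfull (\<lambda>v. \<omega> v x) n \<beta>) - ln (Zfull (truncate_env k (\<lambda>v. \<omega> v x)) n \<beta>) > A}
         \<le> real (card (box n (h 1))) * measure M {x \<in> space M. \<omega> (0, 0) x > k}
           + measure M {x \<in> space M.
               (\<Sum>j=2..L. exp (\<beta> * bigsum k (\<lambda>v. \<omega> v x) n (h j))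
                  * polymer (truncate_env k (\<lambda>v. \<omega> v x)) n \<beta>
                      (paths n - in_strip n (h (j - 1)))) > A}"
proof -
  interpret prob_space M by fact
  have rv: "\<And>v. \<omega> v \<in> borel_measurable M"
    using assms(2) unfolding indep_vars_def by auto
  define S where "S = truncation_sites n (h 1)"
  define E where "E v = {x \<in> space M. \<omega> v x > k}" for v
  define p where "p = prob (E (0, 0))"
  have E_prob: "prob (E v) = p" for v
    unfolding E_def p_def by (rule prob_greater_eq_if_distr_eq[OF rv rv assms(3)])
  define B where "B = {x \<in> space M. exit_weight k (\<lambda>v. \<omega> v x) n \<beta> L h > A}"
  have "{x \<in> space M. ln (Zfull (\<lambda>v. \<omega> v x) n \<beta>) - ln (Zfull (truncate_env k (\<lambda>v. \<omega> v x)) n \<beta>) > A}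
      \<subseteq> (\<Union>v\<in>S. E v) \<union> B"
    using ln_Zfull_diff_le_exit_weight[of n \<beta> k h L, where w = "\<lambda>v. \<omega> v _"] assms(4-6,8,11)
    by (fastforce simp: S_def E_def B_def not_less)
  moreover have "E v \<in> events" for v
    unfolding E_def using rv by measurable
  moreover have "B \<in> events"
    unfolding B_def using measurable_exit_weight[OF rv] by measurable
  ultimately have "measure M {x \<in> space M. ln (Zfull (\<lambda>v. \<omega> v x) n \<beta>)
        - ln (Zfull (truncate_env k (\<lambda>v. \<omega> v x)) n \<beta>) > A}
      \<le> (\<Sum>v\<in>S. prob (E v)) + prob B"
    by (intro prob_le_union_bound) (auto simp: S_def finite_truncation_sites)
  also have "(\<Sum>v\<in>S. prob (E v)) = real (card S) * p"
    using E_prob by simp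
  also have "\<dots> \<le> real (card (box n (h 1))) * p"
    using card_truncation_sites_le[of "h 1" n] assms(4,7,8) assms(9)[of 0]
    by (intro mult_right_mono) (auto simp: S_def p_def)
  finally show ?thesis by (simp add: p_def E_def B_def exit_weight_def)
qed

end
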